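(* Let $\mathscr{A}\in\mathbb{R}^{n_1\times n_2\times n_3}$, $\mathscr{B}\in\mathbb{R}^{n_1\times s\times n_3}$, and suppose $k$ steps of the tensor tubal-global Golub–Kahan algorithm described in the context have been run (without breakdown). Starting from the zero initial guess, for $\mathscr{Y}\in\mathbb{R}^{k\times1\times n_3}$ let $\mathscr{X}_k=\mathbb{V}_k\star(\mathscr{Y}\circledast\mathscr{I}_{ssn_3})$. Then $$\|\mathscr{B}-\mathscr{A}\star\mathscr{X}_k\|_F=\|\mathscr{E}_1^{(k+1)}\star\mathbf{a}_1-\widetilde{\mathscr{C}}_k\star\mathscr{Y}\|_{T_{\ell_2}}.$$
   Context: All tensors are real third-order arrays; $\|\cdot\|_F$ is the Frobenius norm of the array. $\widehat{\mathscr{A}}=\mathscr{A}\times_3F_{n_3}$ denotes the tensor obtained by applying the discrete Fourier transform ($F_{n_3}$ with entries $\omega^{(i-1)(j-1)}$, $\omega=e^{-2\pi\mathrm{i}/n_3}$) to each tube; its frontal slices $\hat A^{(k)}$ are the Fourier slices. T-product: $\mathscr{A}\star\mathscr{B}$ has Fourier slices $\hat A^{(k)}\hat B^{(k)}$. Transpose $\mathscr{A}^T$: transpose each frontal slice and reverse the order of frontal slices $2,\dots,n_3$. $\mathscr{I}_{ssn_3}$: first frontal slice $I_s$, others zero. T-Kronecker product $\mathscr{A}\circledast\mathscr{B}$: Fourier slices $\hat A^{(k)}\otimes\hat B^{(k)}$. A tube is an element of $\mathbb{R}^{1\times1\times n_3}$; $\mathbf{e}$ has entries $(1,0,\dots,0)$,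 $\mathbf{o}$ is the zero tube. For a tube $\mathbf{a}$, $\mathbf{a}\divideontimes\mathscr{W}$ has $(i,j)$ tube $\mathbf{a}\star\mathscr{W}(i,j,:)$. Normalization of $\mathscr{W}$: $\mathbf{a}$ is the tube with $k$-th Fourier coefficient $\|\hat W^{(k)}\|_F$ (breakdown if one is zero) and $\mathscr{Q}$ has Fourier slices $\hat W^{(k)}/\|\hat W^{(k)}\|_F$; output $[\mathscr{Q},\mathbf{a}]$. Tubal-global Golub–Kahan algorithm: $\mathscr{V}_0=0\in\mathbb{R}^{n_2\times s\times n_3}$, $[\mathscr{U}_1,\mathbf{a}_1]=\mathrm{Normalization}(\mathscr{B})$; for $j=1,\dots,k$: $\widetilde{\mathscr{V}}=\mathscr{A}^T\star\mathscr{U}_j-\mathbf{a}_j\divideontimes\mathscr{V}_{j-1}$, $[\mathscr{V}_j,\mathbf{b}_j]=\mathrm{Normalization}(\widetilde{\mathscr{V}})$, $\widetilde{\mathscr{U}}=\mathscr{A}\star\mathscr{V}_j-\mathbf{b}_j\divideontimes\mathscr{U}_j$, $[\mathscr{U}_{j+1},\mathbf{a}_{j+1}]=\mathrm{Normalization}(\widetilde{\mathscr{U}})$. Notation: $\mathbb{V}_k=[\mathscr{V}_1,\dots,\mathscr{V}_k]\in\mathbb{R}^{n_2\times ks\times n_3}$ (concatenation along mode 2). $\widetilde{\mathscr{C}}_k\in\mathbb{R}^{(k+1)\times k\times n_3}$ is the bidiagonal tensor whose $(j,j)$ tube is $\mathbf{b}_j$, whose $(j+1,j)$ tube is $\mathbf{a}_{j+1}$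 ($j=1,\dots,k$), and other tubes $\mathbf{o}$. $\mathscr{E}_1^{(k+1)}=[\mathbf{e};\mathbf{o};\dots;\mathbf{o}]\in\mathbb{R}^{(k+1)\times1\times n_3}$. T-$\ell_2$ norm of $\mathscr{Y}\in\mathbb{R}^{p\times1\times n_3}$: $\|\mathscr{Y}\|_{T_{\ell_2}}=\frac{1}{\sqrt{n_3}}\big(\sum_{k=1}^{n_3}\|\hat Y^{(k)}\|_2^2\big)^{1/2}$. *)

theory Defs
  imports Complex_Main
begin

text \<open>Real third-order tensors are represented as functions of three 0-based indices;
  dimensions are passed explicitly and only entries within the stated dimensions are ever used.
  A tube (element of R^{1 x 1 x n3}) is a tensor whose (0,0,l) entries are relevant.\<close>

type_synonym tensor = "nat \<Rightarrow> nat \<Rightarrow> nat \<Rightarrow> real"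

definition omega :: "nat \<Rightarrow> complex" where
  "omega n3 = cis (- 2 * pi / real n3)"

text \<open>Fourier slice: fslice n3 A t i j is entry (i,j) of the (t+1)-th frontal slice of A x_3 F_{n3}.\<close>
definition fslice :: "nat \<Rightarrow> tensor \<Rightarrow> nat \<Rightarrow> nat \<Rightarrow> nat \<Rightarrow> complex" where
  "fslice n3 A t i j = (\<Sum>l<n3. complex_of_real (A i j l) * omega n3 ^ (t * l))"

text \<open>Real tensor with prescribed Fourier slices F (inverse DFT along tubes; real part taken,
  which is exact for the conjugate-symmetric slice families arising below).\<close>
definition ifourier :: "nat \<Rightarrow> (nat \<Rightarrow> nat \<Rightarrow> nat \<Rightarrow> complex) \<Rightarrow> tensor" where
  "ifourier n3 F = (\<lambda>i j l. Re ((\<Sum>t<n3. F t i j * cnj (omega n3) ^ (t * l)) / of_nat n3))"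

definition tprod :: "nat \<Rightarrow> nat \<Rightarrow> tensor \<Rightarrow> tensor \<Rightarrow> tensor" where
  "tprod n3 m A B = ifourier n3 (\<lambda>t i j. \<Sum>p<m. fslice n3 A t i p * fslice n3 B t p j)"

definition ttrans :: "nat \<Rightarrow> tensor \<Rightarrow> tensor" where
  "ttrans n3 A = (\<lambda>i j l. if l = 0 then A j i 0 else A j i (n3 - l))"

definition tid :: tensor where
  "tid = (\<lambda>i j l. if l = 0 \<and> i = j then 1 else 0)"

definition tkron :: "nat \<Rightarrow> nat \<Rightarrow> nat \<Rightarrow> tensor \<Rightarrow> tensor \<Rightarrow> tensor" where
  "tkron n3 p2 q2 A B = ifourier n3 (\<lambda>t i j.
      fslice n3 A t (i div p2) (j div q2) * fslice n3 B t (i mod p2) (j mod q2))"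

definition frob :: "nat \<Rightarrow> nat \<Rightarrow> nat \<Rightarrow> tensor \<Rightarrow> real" where
  "frob p q n3 A = sqrt (\<Sum>i<p. \<Sum>j<q. \<Sum>l<n3. (A i j l)\<^sup>2)"

definition cfrob :: "nat \<Rightarrow> nat \<Rightarrow> (nat \<Rightarrow> nat \<Rightarrow> complex) \<Rightarrow> real" where
  "cfrob p q M = sqrt (\<Sum>i<p. \<Sum>j<q. (cmod (M i j))\<^sup>2)"

definition tscale :: "nat \<Rightarrow> tensor \<Rightarrow> tensor \<Rightarrow> tensor" where
  "tscale n3 a W = (\<lambda>i j l. tprod n3 1 (\<lambda>_ _. a 0 0) (\<lambda>_ _. W i j) 0 0 l)"

text \<open>Normalization of W (p x q x n3): None signals breakdown.\<close>
definition normalization :: "nat \<Rightarrow> nat \<Rightarrow> nat \<Rightarrow> tensor \<Rightarrow> (tensor \<times> tensor) option" where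
  "normalization p q n3 W =
     (if \<exists>t<n3. cfrob p q (fslice n3 W t) = 0 then None
      else Some (ifourier n3 (\<lambda>t i j. fslice n3 W t i j / complex_of_real (cfrob p q (fslice n3 W t))),
                 ifourier n3 (\<lambda>t i j. complex_of_real (cfrob p q (fslice n3 W t)))))"

text \<open>One Golub-Kahan step: state (U_j, a_j, V_{j-1}, b_{j-1}) to (U_{j+1}, a_{j+1}, V_j, b_j).\<close>
definition gk_step :: "nat \<Rightarrow> nat \<Rightarrow> nat \<Rightarrow> nat \<Rightarrow> tensor \<Rightarrow>
    tensor \<times> tensor \<times> tensor \<times> tensor \<Rightarrow> (tensor \<times> tensor \<times> tensor \<times> tensor) option" where
  "gk_step n1 n2 n3 s A st =
     (case st of (U, a, Vold, _) \<Rightarrow>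
       (case normalization n2 s n3 (\<lambda>i j l. tprod n3 n1 (ttrans n3 A) U i j l - tscale n3 a Vold i j l) of
          None \<Rightarrow> None
        | Some (V, b) \<Rightarrow>
           (case normalization n1 s n3 (\<lambda>i j l. tprod n3 n2 A V i j l - tscale n3 b U i j l) of
              None \<Rightarrow> None
            | Some (U', a') \<Rightarrow> Some (U', a', V, b))))"

text \<open>gk_state ... m = Some (U_{m+1}, a_{m+1}, V_m, b_m) (V_0 = 0, b_0 = 0 unused), or None on breakdown.\<close>
primrec gk_state :: "nat \<Rightarrow> nat \<Rightarrow> nat \<Rightarrow> nat \<Rightarrow> tensor \<Rightarrow> tensor \<Rightarrow> nat \<Rightarrow>
    (tensor \<times> tensor \<times> tensor \<times> tensor) option" where
  "gk_state n1 n2 n3 s A B 0 =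
     (case normalization n1 s n3 B of None \<Rightarrow> None
      | Some (U, a) \<Rightarrow> Some (U, a, (\<lambda>_ _ _. 0), (\<lambda>_ _ _. 0)))"
| "gk_state n1 n2 n3 s A B (Suc m) =
     (case gk_state n1 n2 n3 s A B m of None \<Rightarrow> None | Some st \<Rightarrow> gk_step n1 n2 n3 s A st)"

text \<open>Accessors (1-based indices as in the paper): U_j, a_j for j \<ge> 1, V_j, b_j for j \<ge> 1.\<close>
definition gkU :: "nat \<Rightarrow> nat \<Rightarrow> nat \<Rightarrow> nat \<Rightarrow> tensor \<Rightarrow> tensor \<Rightarrow> nat \<Rightarrow> tensor" where
  "gkU n1 n2 n3 s A B j = fst (the (gk_state n1 n2 n3 s A B (j - 1)))"
definition gka :: "nat \<Rightarrow> nat \<Rightarrow> nat \<Rightarrow> nat \<Rightarrow> tensor \<Rightarrow> tensor \<Rightarrow> nat \<Rightarrow> tensor" where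
  "gka n1 n2 n3 s A B j = fst (snd (the (gk_state n1 n2 n3 s A B (j - 1))))"
definition gkV :: "nat \<Rightarrow> nat \<Rightarrow> nat \<Rightarrow> nat \<Rightarrow> tensor \<Rightarrow> tensor \<Rightarrow> nat \<Rightarrow> tensor" where
  "gkV n1 n2 n3 s A B j = fst (snd (snd (the (gk_state n1 n2 n3 s A B j))))"
definition gkb :: "nat \<Rightarrow> nat \<Rightarrow> nat \<Rightarrow> nat \<Rightarrow> tensor \<Rightarrow> tensor \<Rightarrow> nat \<Rightarrow> tensor" where
  "gkb n1 n2 n3 s A B j = snd (snd (snd (the (gk_state n1 n2 n3 s A B j))))"

text \<open>\<bbbV>_k = [V_1, ..., V_k] (n2 x ks x n3).\<close>
definition gkVcat :: "nat \<Rightarrow> nat \<Rightarrow> nat \<Rightarrow> nat \<Rightarrow> tensor \<Rightarrow> tensor \<Rightarrow> tensor" where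
  "gkVcat n1 n2 n3 s A B = (\<lambda>i c l. gkV n1 n2 n3 s A B (c div s + 1) i (c mod s) l)"

text \<open>Bidiagonal (k+1) x k tensor C~_k (0-based: (j,j) tube b_{j+1}, (j+1,j) tube a_{j+2}).\<close>
definition gkC :: "nat \<Rightarrow> nat \<Rightarrow> nat \<Rightarrow> nat \<Rightarrow> tensor \<Rightarrow> tensor \<Rightarrow> nat \<Rightarrow> tensor" where
  "gkC n1 n2 n3 s A B k = (\<lambda>i j l.
     if j < k \<and> i = j then gkb n1 n2 n3 s A B (j + 1) 0 0 l
     else if j < k \<and> i = j + 1 then gka n1 n2 n3 s A B (j + 2) 0 0 l
     else 0)"

definition E1 :: tensor where
  "E1 = (\<lambda>i j l. if i = 0 \<and> l = 0 then 1 else 0)"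

definition tl2 :: "nat \<Rightarrow> nat \<Rightarrow> tensor \<Rightarrow> real" where
  "tl2 p n3 Y = sqrt (\<Sum>t<n3. \<Sum>i<p. (cmod (fslice n3 Y t i 0))\<^sup>2) / sqrt (real n3)"

end

(*
  In the Fourier domain every operation acts slice by slice, and the t-th slices of the
  tubal-global Golub-Kahan iterates are exactly those of the matrix Golub-Kahan
  bidiagonalization of the slice of A started from the slice of B; the normalizing tubes have
  real Fourier coefficients, namely the slice norms. The three-term recurrences make the slices
  of U_1, ..., U_(k+1) orthonormal and give A V_k = U_(k+1) C_k slice-wise, so the residual
  slice of B - A X_k is U_(k+1) applied to the slice of E_1 a_1 - C_k Y, and its Frobenius norm
  is the Euclidean norm of that small residual. Parseval's identity along the tubes turns the
  sums of the squared slice norms into the Frobenius norm and the T-l2 norm respectively.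
*)
theory Submission
  imports Defs
begin

section \<open>Discrete Fourier transform along tubes\<close>

lemma dvd_iff_eq_of_less_double:
  fixes x n :: nat
  assumes "0 < x" "x < 2 * n"
  shows "n dvd x \<longleftrightarrow> x = n"
proof
  assume "n dvd x"
  then obtain c where c: "x = n * c" by (auto elim: dvdE)
  with assms have "c = 1" by (cases c) (auto simp: numeral_2_eq_2)
  with c show "x = n" by simp
qed simp

lemma dvd_add_rev_iff:
  fixes a b n :: nat
  assumes "a < n" "b < n"
  shows "n dvd a + (n - b) mod n \<longleftrightarrow> a = b"
proof (cases "b = 0")
  case True
  thus ?thesis using assms by (auto dest: dvd_imp_le)
next
  case False
  hence "n dvd a + (n - b) \<longleftrightarrow> a + (n - b) = n"
    using assms by (intro dvd_iff_eq_of_less_double) auto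
  thus ?thesis using False assms by auto
qed

lemma sum_lessThan_rev_mod:
  assumes "0 < (n::nat)"
  shows "(\<Sum>t<n. f ((n - t) mod n)) = (\<Sum>t<n. f t)"
proof -
  have rev_rev: "(n - (n - t) mod n) mod n = t" if "t < n" for t
    using that by (cases "t = 0") auto
  show ?thesis
    by (rule sum.reindex_bij_witness[where i="\<lambda>t. (n - t) mod n" and j="\<lambda>t. (n - t) mod n"])
       (use assms rev_rev in auto)
qed

lemma omega_pow: "omega n ^ m = cis (- 2 * pi * real m / real n)"
  by (simp add: omega_def DeMoivre field_simps)

lemma omega_pow_eq_1_iff:
  assumes "0 < n"
  shows "omega n ^ m = 1 \<longleftrightarrow> n dvd m"
proof
  assume "omega n ^ m = 1"
  hence "cos (2 * pi * real m / real n) = 1"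
    by (simp add: omega_pow complex_eq_iff)
  then obtain c :: int where "2 * pi * real m / real n = c * 2 * pi"
    by (auto simp: cos_one_2pi_int)
  hence "real m = real n * c" using assms by (simp add: field_simps)
  hence "int m = int n * c" by (metis of_int_eq_iff of_int_mult of_int_of_nat_eq)
  thus "n dvd m" by (metis dvd_triv_left int_dvd_int_iff)
next
  assume "n dvd m"
  then obtain c where "m = n * c" by (auto elim: dvdE)
  moreover have "cis (2 * pi * (- real c)) = 1" by (rule cis_multiple_2pi) simp
  ultimately show "omega n ^ m = 1" using assms by (simp add: omega_pow mult.assoc)
qed

lemma omega_pow_sum:
  assumes "0 < n"
  shows "(\<Sum>t<n. omega n ^ (t * m)) = (if n dvd m then of_nat n else 0)"
proof (cases "n dvd m")
  case True
  hence "omega n ^ (t * m) = 1" for t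
    using assms by (simp add: omega_pow_eq_1_iff)
  thus ?thesis using True by simp
next
  case False
  hence ne: "omega n ^ m \<noteq> 1" using omega_pow_eq_1_iff[OF assms] by auto
  have "(\<Sum>t<n. omega n ^ (t * m)) = (\<Sum>t<n. (omega n ^ m) ^ t)"
    by (simp add: power_mult[symmetric] mult.commute)
  also have "\<dots> = ((omega n ^ m) ^ n - 1) / (omega n ^ m - 1)"
    using ne by (rule geometric_sum)
  also have "(omega n ^ m) ^ n = 1"
    using assms by (simp add: power_mult[symmetric] omega_pow_eq_1_iff)
  finally show ?thesis using False by simp
qed

lemma omega_pow_eq_cnj:
  assumes "0 < n" "n dvd a + b"
  shows "omega n ^ a = cnj (omega n ^ b)"
proof -
  have "omega n ^ a * omega n ^ b = 1"
    using assms by (simp add: power_add[symmetric] omega_pow_eq_1_iff)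
  moreover have "cmod (omega n ^ b) = 1"
    by (simp add: omega_def norm_power)
  hence "omega n ^ b * cnj (omega n ^ b) = 1"
    using complex_norm_square[of "omega n ^ b"] by simp
  ultimately show ?thesis by (metis mult.assoc mult.commute mult_1_right)
qed

lemma omega_pow_rev:
  assumes "0 < n" "t < n"
  shows "omega n ^ ((n - t) mod n * l) = cnj (omega n ^ (t * l))"
proof -
  have "n dvd (n - t) mod n + t"
    using assms dvd_add_rev_iff[of t n t] by (simp add: add.commute)
  hence "n dvd (n - t) mod n * l + t * l"
    by (metis dvd_mult2 add_mult_distrib)
  thus ?thesis by (rule omega_pow_eq_cnj[OF assms(1)])
qed

lemma omega_orthogonal:
  assumes "0 < n" "a < n" "b < n"
  shows "(\<Sum>l<n. omega n ^ (a * l) * cnj (omega n) ^ (b * l)) = (if a = b then of_nat n else 0)"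
proof -
  have "(\<Sum>l<n. omega n ^ (a * l) * cnj (omega n) ^ (b * l))
      = (\<Sum>l<n. omega n ^ (l * (a + (n - b) mod n)))"
  proof (rule sum.cong[OF refl])
    fix l
    have "cnj (omega n) ^ (b * l) = omega n ^ ((n - b) mod n * l)"
      using assms by (simp only: omega_pow_rev complex_cnj_power)
    thus "omega n ^ (a * l) * cnj (omega n) ^ (b * l) = omega n ^ (l * (a + (n - b) mod n))"
      by (simp only: power_add[symmetric]) (simp add: algebra_simps)
  qed
  also have "\<dots> = (if a = b then of_nat n else 0)"
    using assms by (simp add: omega_pow_sum dvd_add_rev_iff)
  finally show ?thesis .
qed

definition conj_symmetric :: "nat \<Rightarrow> (nat \<Rightarrow> nat \<Rightarrow> nat \<Rightarrow> complex) \<Rightarrow> bool" where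
  "conj_symmetric n F \<longleftrightarrow> (\<forall>t<n. \<forall>i j. F ((n - t) mod n) i j = cnj (F t i j))"

lemma fslice_rev:
  assumes "0 < n" "t < n"
  shows "fslice n A ((n - t) mod n) i j = cnj (fslice n A t i j)"
  unfolding fslice_def using omega_pow_rev[OF assms] by (simp add: cnj_sum)

text \<open>\<open>ifourier\<close> takes the real part, which loses nothing when the prescribed slices are
  conjugate symmetric.\<close>
lemma fslice_ifourier:
  assumes n: "0 < n" and F: "conj_symmetric n F" and t: "t < n"
  shows "fslice n (ifourier n F) t i j = F t i j"
proof -
  define G where "G l = (\<Sum>u<n. F u i j * cnj (omega n) ^ (u * l)) / of_nat n" for l
  have "cnj (G l) = (\<Sum>u<n. F ((n - u) mod n) i j * cnj (omega n) ^ ((n - u) mod n * l)) / of_nat n" for l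
    using F n unfolding G_def conj_symmetric_def
    by (simp add: cnj_sum omega_pow_rev flip: complex_cnj_power)
  hence "cnj (G l) = G l" for l
    unfolding G_def by (simp only: sum_lessThan_rev_mod[OF n, where f="\<lambda>u. F u i j * cnj (omega n) ^ (u * l)"])
  hence G_real: "complex_of_real (Re (G l)) = G l" for l
    by (metis Reals_cnj_iff of_real_Re)
  have "fslice n (ifourier n F) t i j = (\<Sum>l<n. G l * omega n ^ (t * l))"
    unfolding fslice_def ifourier_def G_def[symmetric] using G_real by simp
  also have "\<dots> = (\<Sum>l<n. \<Sum>u<n. F u i j * (omega n ^ (t * l) * cnj (omega n) ^ (u * l)) / of_nat n)"
    unfolding G_def sum_divide_distrib sum_distrib_right by (simp add: mult_ac)
  also have "\<dots> = (\<Sum>u<n. F u i j * (\<Sum>l<n. omega n ^ (t * l) * cnj (omega n) ^ (u * l)) / of_nat n)"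
    by (subst sum.swap) (simp add: sum_divide_distrib sum_distrib_left)
  also have "\<dots> = (\<Sum>u<n. if u = t then F t i j else 0)"
    using n t by (intro sum.cong refl) (auto simp: omega_orthogonal)
  also have "\<dots> = F t i j"
    using t by simp
  finally show ?thesis .
qed

lemma dft_parseval:
  assumes n: "0 < n"
  shows "(\<Sum>t<n. (cmod (\<Sum>l<n. complex_of_real (x l) * omega n ^ (t * l)))\<^sup>2)
       = real n * (\<Sum>l<n. (x l)\<^sup>2)"
proof -
  have "complex_of_real (\<Sum>t<n. (cmod (\<Sum>l<n. complex_of_real (x l) * omega n ^ (t * l)))\<^sup>2)
      = (\<Sum>t<n. \<Sum>l<n. \<Sum>l'<n. complex_of_real (x l * x l') * (omega n ^ (l' * t) * cnj (omega n) ^ (l * t)))"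
    by (simp only: of_real_sum complex_norm_square) (simp add: cnj_sum sum_distrib_left sum_distrib_right mult_ac)
  also have "\<dots> = (\<Sum>l<n. \<Sum>l'<n. complex_of_real (x l * x l')
                          * (\<Sum>t<n. omega n ^ (l' * t) * cnj (omega n) ^ (l * t)))"
    by (subst sum.swap, rule sum.cong[OF refl], subst sum.swap) (simp add: sum_distrib_left)
  also have "\<dots> = complex_of_real (real n * (\<Sum>l<n. (x l)\<^sup>2))"
    using n by (simp add: omega_orthogonal if_distrib sum_distrib_left power2_eq_square mult_ac cong: if_cong)
  finally show ?thesis by (simp only: of_real_eq_iff)
qed

lemma frob_eq_fslice_cfrob:
  assumes n: "0 < n"
  shows "frob p q n X = sqrt (\<Sum>t<n. (cfrob p q (fslice n X t))\<^sup>2) / sqrt (real n)"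
proof -
  have "(\<Sum>t<n. (cfrob p q (fslice n X t))\<^sup>2) = (\<Sum>i<p. \<Sum>j<q. \<Sum>t<n. (cmod (fslice n X t i j))\<^sup>2)"
    unfolding cfrob_def by (simp add: sum_nonneg) (subst sum.swap, rule sum.cong[OF refl], rule sum.swap)
  also have "\<dots> = real n * (\<Sum>i<p. \<Sum>j<q. \<Sum>l<n. (X i j l)\<^sup>2)"
    using n by (simp add: fslice_def dft_parseval sum_distrib_left)
  finally show ?thesis
    using n unfolding frob_def by (simp add: real_sqrt_mult)
qed

lemma tl2_eq_fslice_cfrob:
  "tl2 p n Y = sqrt (\<Sum>t<n. (cfrob p 1 (fslice n Y t))\<^sup>2) / sqrt (real n)"
  unfolding tl2_def cfrob_def by (simp add: sum_nonneg)

section \<open>Fourier slices of the tensor operations\<close>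

lemma fslice_tprod:
  assumes "0 < n" "t < n"
  shows "fslice n (tprod n m A B) t i j = (\<Sum>p<m. fslice n A t i p * fslice n B t p j)"
proof -
  have "conj_symmetric n (\<lambda>t i j. \<Sum>p<m. fslice n A t i p * fslice n B t p j)"
    unfolding conj_symmetric_def using assms(1) by (simp add: fslice_rev cnj_sum)
  thus ?thesis unfolding tprod_def using assms by (simp add: fslice_ifourier)
qed

lemma fslice_tkron:
  assumes "0 < n" "t < n"
  shows "fslice n (tkron n p2 q2 A B) t i j
       = fslice n A t (i div p2) (j div q2) * fslice n B t (i mod p2) (j mod q2)"
proof -
  have "conj_symmetric n (\<lambda>t i j. fslice n A t (i div p2) (j div q2) * fslice n B t (i mod p2) (j mod q2))"
    unfolding conj_symmetric_def using assms(1) by (simp add: fslice_rev)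
  thus ?thesis unfolding tkron_def using assms by (simp add: fslice_ifourier)
qed

lemma fslice_diff:
  "fslice n (\<lambda>i j l. X i j l - Y i j l) t i j = fslice n X t i j - fslice n Y t i j"
  unfolding fslice_def by (simp add: sum_subtractf algebra_simps)

lemma fslice_zero [simp]: "fslice n (\<lambda>_ _ _. 0) t i j = 0"
  unfolding fslice_def by simp

lemma fslice_ttrans:
  assumes n: "0 < n" and t: "t < n"
  shows "fslice n (ttrans n A) t i j = cnj (fslice n A t j i)"
proof -
  have "fslice n (ttrans n A) t i j
      = (\<Sum>l<n. complex_of_real (A j i ((n - l) mod n)) * cnj (omega n ^ (t * ((n - l) mod n))))"
    unfolding fslice_def ttrans_def using n
    by (intro sum.cong refl) (auto simp: omega_pow_rev mult.commute[of t])
  also have "\<dots> = (\<Sum>l<n. complex_of_real (A j i l) * cnj (omega n ^ (t * l)))"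
    by (rule sum_lessThan_rev_mod[OF n, where f="\<lambda>l. complex_of_real (A j i l) * cnj (omega n ^ (t * l))"])
  finally show ?thesis
    unfolding fslice_def by (simp add: cnj_sum)
qed

lemma fslice_tid:
  assumes "0 < n"
  shows "fslice n tid t i j = (if i = j then 1 else 0)"
proof -
  have "fslice n tid t i j = (\<Sum>l<n. if l = 0 then (if i = j then 1 else 0) else 0)"
    unfolding fslice_def tid_def by (intro sum.cong refl) auto
  thus ?thesis using assms by simp
qed

lemma fslice_E1:
  assumes "0 < n"
  shows "fslice n E1 t i j = (if i = 0 then 1 else 0)"
proof -
  have "fslice n E1 t i j = (\<Sum>l<n. if l = 0 then (if i = 0 then 1 else 0) else 0)"
    unfolding fslice_def E1_def by (intro sum.cong refl) auto
  thus ?thesis using assms by simp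
qed

lemma fslice_tscale:
  assumes "0 < n" "t < n"
  shows "fslice n (tscale n a W) t i j = fslice n a t 0 0 * fslice n W t i j"
proof -
  have "fslice n (tscale n a W) t i j = fslice n (tprod n 1 (\<lambda>_ _. a 0 0) (\<lambda>_ _. W i j)) t 0 0"
    unfolding fslice_def tscale_def by simp
  thus ?thesis using assms by (simp add: fslice_tprod) (simp add: fslice_def)
qed

lemma cfrob_cnj: "cfrob p q (\<lambda>i j. cnj (M i j)) = cfrob p q M"
  unfolding cfrob_def by simp

lemma cfrob_cong:
  assumes "\<And>i j. i < p \<Longrightarrow> j < q \<Longrightarrow> M i j = M' i j"
  shows "cfrob p q M = cfrob p q M'"
  unfolding cfrob_def using assms by simp

section \<open>Frobenius inner product of complex matrices\<close>

type_synonym cmat = "nat \<Rightarrow> nat \<Rightarrow> complex"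

definition frob_inner :: "nat \<Rightarrow> nat \<Rightarrow> cmat \<Rightarrow> cmat \<Rightarrow> complex" where
  "frob_inner p q X Y = (\<Sum>i<p. \<Sum>j<q. cnj (X i j) * Y i j)"

definition mat_mult :: "nat \<Rightarrow> cmat \<Rightarrow> cmat \<Rightarrow> cmat" where
  "mat_mult m M X = (\<lambda>i j. \<Sum>p<m. M i p * X p j)"

definition mat_adjoint :: "cmat \<Rightarrow> cmat" where
  "mat_adjoint M = (\<lambda>i j. cnj (M j i))"

lemma mat_adjoint_adjoint [simp]: "mat_adjoint (mat_adjoint M) = M"
  unfolding mat_adjoint_def by simp

lemma cnj_frob_inner: "cnj (frob_inner p q X Y) = frob_inner p q Y X"
  unfolding frob_inner_def by (simp add: cnj_sum mult.commute)

lemma frob_inner_diff_right: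
  "frob_inner p q X (\<lambda>i j. Y i j - Z i j) = frob_inner p q X Y - frob_inner p q X Z"
  unfolding frob_inner_def by (simp add: sum_subtractf algebra_simps)

lemma frob_inner_add_left:
  "frob_inner p q (\<lambda>i j. X i j + Y i j) Z = frob_inner p q X Z + frob_inner p q Y Z"
  unfolding frob_inner_def by (simp add: sum.distrib algebra_simps)

lemma frob_inner_scale_right: "frob_inner p q X (\<lambda>i j. c * Y i j) = c * frob_inner p q X Y"
  unfolding frob_inner_def by (simp add: sum_distrib_left algebra_simps)

lemma frob_inner_scale_left: "frob_inner p q (\<lambda>i j. c * X i j) Y = cnj c * frob_inner p q X Y"
  unfolding frob_inner_def by (simp add: sum_distrib_left algebra_simps)

lemma frob_inner_zero_left [simp]: "frob_inner p q (\<lambda>i j. 0) Y = 0"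
  unfolding frob_inner_def by simp

lemma frob_inner_sum_left:
  "frob_inner p q (\<lambda>a b. \<Sum>i\<in>I. X i a b) Y = (\<Sum>i\<in>I. frob_inner p q (X i) Y)"
proof -
  have "frob_inner p q (\<lambda>a b. \<Sum>i\<in>I. X i a b) Y = (\<Sum>a<p. \<Sum>b<q. \<Sum>i\<in>I. cnj (X i a b) * Y a b)"
    unfolding frob_inner_def by (simp add: cnj_sum sum_distrib_right)
  also have "\<dots> = (\<Sum>i\<in>I. \<Sum>a<p. \<Sum>b<q. cnj (X i a b) * Y a b)"
    by (subst sum.swap[where A="{..<q}"]) (rule sum.swap)
  finally show ?thesis unfolding frob_inner_def .
qed

lemma frob_inner_sum_right:
  "frob_inner p q X (\<lambda>a b. \<Sum>i\<in>I. Y i a b) = (\<Sum>i\<in>I. frob_inner p q X (Y i))"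
proof -
  have "cnj (frob_inner p q X (\<lambda>a b. \<Sum>i\<in>I. Y i a b)) = cnj (\<Sum>i\<in>I. frob_inner p q X (Y i))"
    by (simp add: cnj_frob_inner frob_inner_sum_left cnj_sum)
  thus ?thesis by (simp only: complex_cnj_cancel_iff)
qed

lemma frob_inner_self: "frob_inner p q X X = complex_of_real ((cfrob p q X)\<^sup>2)"
proof -
  have "complex_of_real ((cfrob p q X)\<^sup>2) = (\<Sum>i<p. \<Sum>j<q. complex_of_real ((cmod (X i j))\<^sup>2))"
    unfolding cfrob_def by (simp add: sum_nonneg del: of_real_power)
  thus ?thesis unfolding frob_inner_def complex_norm_square by (simp add: mult.commute)
qed

lemma frob_inner_mat_adjoint:
  "frob_inner n2 q X (mat_mult n1 (mat_adjoint M) Y) = frob_inner n1 q (mat_mult n2 M X) Y"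
proof -
  have "frob_inner n2 q X (mat_mult n1 (mat_adjoint M) Y)
      = (\<Sum>i<n2. \<Sum>j<q. \<Sum>p<n1. cnj (X i j) * cnj (M p i) * Y p j)"
    unfolding frob_inner_def mat_mult_def mat_adjoint_def by (simp add: sum_distrib_left mult.assoc)
  also have "\<dots> = (\<Sum>p<n1. \<Sum>j<q. \<Sum>i<n2. cnj (X i j) * cnj (M p i) * Y p j)"
    by (subst sum.swap, subst sum.swap[where A="{..<n2}"], rule sum.cong[OF refl], rule sum.swap)
  also have "\<dots> = frob_inner n1 q (mat_mult n2 M X) Y"
    unfolding frob_inner_def mat_mult_def by (simp add: cnj_sum sum_distrib_right sum_distrib_left mult_ac)
  finally show ?thesis .
qed

definition orthonormal_on :: "nat \<Rightarrow> nat \<Rightarrow> (nat \<Rightarrow> cmat) \<Rightarrow> nat set \<Rightarrow> bool" where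
  "orthonormal_on p q X I \<longleftrightarrow>
     (\<forall>i\<in>I. \<forall>j\<in>I. frob_inner p q (X i) (X j) = (if i = j then 1 else 0))"

lemma orthonormal_on_insert:
  assumes "orthonormal_on p q X I"
    and "\<And>i. i \<in> I \<Longrightarrow> frob_inner p q (X i) (X m) = 0"
    and "frob_inner p q (X m) (X m) = 1"
  shows "orthonormal_on p q X (insert m I)"
proof -
  have "frob_inner p q (X m) (X i) = 0" if "i \<in> I" for i
    using assms(2)[OF that] cnj_frob_inner[of p q "X i" "X m"] by simp
  thus ?thesis using assms unfolding orthonormal_on_def by auto
qed

lemma cfrob_orthonormal_sum:
  assumes "orthonormal_on p q X I" "finite I"
  shows "cfrob p q (\<lambda>a b. \<Sum>i\<in>I. r i * X i a b) = sqrt (\<Sum>i\<in>I. (cmod (r i))\<^sup>2)"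
proof -
  have "complex_of_real ((cfrob p q (\<lambda>a b. \<Sum>i\<in>I. r i * X i a b))\<^sup>2)
      = frob_inner p q (\<lambda>a b. \<Sum>i\<in>I. r i * X i a b) (\<lambda>a b. \<Sum>i\<in>I. r i * X i a b)"
    by (rule frob_inner_self[symmetric])
  also have "\<dots> = (\<Sum>i\<in>I. \<Sum>j\<in>I. cnj (r i) * r j * frob_inner p q (X i) (X j))"
    by (simp add: frob_inner_sum_left frob_inner_sum_right frob_inner_scale_left
        frob_inner_scale_right mult_ac)
  also have "\<dots> = (\<Sum>i\<in>I. \<Sum>j\<in>I. if j = i then cnj (r i) * r i else 0)"
    using assms(1) unfolding orthonormal_on_def by (intro sum.cong refl) auto
  also have "\<dots> = (\<Sum>i\<in>I. cnj (r i) * r i)"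
    using assms(2) by simp
  also have "\<dots> = complex_of_real (\<Sum>i\<in>I. (cmod (r i))\<^sup>2)"
    unfolding of_real_sum complex_norm_square by (simp add: mult.commute)
  finally have sq: "(cfrob p q (\<lambda>a b. \<Sum>i\<in>I. r i * X i a b))\<^sup>2 = (\<Sum>i\<in>I. (cmod (r i))\<^sup>2)"
    by (simp only: of_real_eq_iff)
  have "0 \<le> cfrob p q (\<lambda>a b. \<Sum>i\<in>I. r i * X i a b)"
    unfolding cfrob_def by (simp add: sum_nonneg)
  from real_sqrt_unique[OF sq this] show ?thesis by (rule sym)
qed

section \<open>Golub-Kahan bidiagonalization of a complex matrix\<close>

locale golub_kahan_bidiag =
  fixes n1 n2 q k :: nat and M :: cmat and U V :: "nat \<Rightarrow> cmat" and \<alpha> \<beta> :: "nat \<Rightarrow> real"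
  assumes V_0: "V 0 = (\<lambda>i j. 0)"
    and U_1_unit: "frob_inner n1 q (U 1) (U 1) = 1"
    and V_Suc: "\<And>m i j. m < k \<Longrightarrow> complex_of_real (\<beta> (Suc m)) * V (Suc m) i j
                   = mat_mult n1 (mat_adjoint M) (U (Suc m)) i j - complex_of_real (\<alpha> (Suc m)) * V m i j"
    and V_Suc_unit: "\<And>m. m < k \<Longrightarrow> frob_inner n2 q (V (Suc m)) (V (Suc m)) = 1"
    and U_Suc: "\<And>m i j. m < k \<Longrightarrow> complex_of_real (\<alpha> (Suc (Suc m))) * U (Suc (Suc m)) i j
                   = mat_mult n2 M (V (Suc m)) i j - complex_of_real (\<beta> (Suc m)) * U (Suc m) i j"
    and U_Suc_unit: "\<And>m. m < k \<Longrightarrow> frob_inner n1 q (U (Suc (Suc m))) (U (Suc (Suc m))) = 1"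
    and \<alpha>_nonzero: "\<And>m. m < k \<Longrightarrow> \<alpha> (Suc (Suc m)) \<noteq> 0"
    and \<beta>_nonzero: "\<And>m. m < k \<Longrightarrow> \<beta> (Suc m) \<noteq> 0"
begin

lemma mat_mult_V:
  assumes "m < k"
  shows "mat_mult n2 M (V (Suc m))
       = (\<lambda>a b. complex_of_real (\<alpha> (Suc (Suc m))) * U (Suc (Suc m)) a b
              + complex_of_real (\<beta> (Suc m)) * U (Suc m) a b)"
  using U_Suc[OF assms] by (intro ext) (simp add: algebra_simps)

lemma mat_mult_adjoint_U:
  assumes "m < k"
  shows "mat_mult n1 (mat_adjoint M) (U (Suc m))
       = (\<lambda>a b. complex_of_real (\<beta> (Suc m)) * V (Suc m) a b + complex_of_real (\<alpha> (Suc m)) * V m a b)"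
  using V_Suc[OF assms] by (intro ext) (simp add: algebra_simps)

text \<open>Moving \<open>M\<close> across the inner product and expanding with the recurrence of the other
  family leaves a difference of two equal terms.\<close>
lemma V_Suc_orthogonal:
  assumes m: "m < k" and U: "orthonormal_on n1 q U {1..Suc m}" and V: "orthonormal_on n2 q V {1..m}"
    and i: "i \<in> {1..m}"
  shows "frob_inner n2 q (V i) (V (Suc m)) = 0"
proof -
  obtain i' where i': "i = Suc i'" "i' < k" using i m by (cases i) auto
  have "complex_of_real (\<beta> (Suc m)) * frob_inner n2 q (V i) (V (Suc m))
      = frob_inner n2 q (V i) (\<lambda>a b. complex_of_real (\<beta> (Suc m)) * V (Suc m) a b)"
    by (simp only: frob_inner_scale_right)
  also have "\<dots> = frob_inner n1 q (mat_mult n2 M (V i)) (U (Suc m))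
        - complex_of_real (\<alpha> (Suc m)) * frob_inner n2 q (V i) (V m)"
    by (simp add: V_Suc[OF m] frob_inner_diff_right frob_inner_scale_right frob_inner_mat_adjoint)
  also have "frob_inner n1 q (mat_mult n2 M (V i)) (U (Suc m))
      = complex_of_real (\<alpha> (Suc i)) * frob_inner n1 q (U (Suc i)) (U (Suc m))
        + complex_of_real (\<beta> i) * frob_inner n1 q (U i) (U (Suc m))"
    by (simp add: i' mat_mult_V frob_inner_add_left frob_inner_scale_left)
  finally have "complex_of_real (\<beta> (Suc m)) * frob_inner n2 q (V i) (V (Suc m)) = 0"
    using U V i unfolding orthonormal_on_def by auto
  thus ?thesis using \<beta>_nonzero[OF m] by simp
qed

lemma U_Suc_orthogonal:
  assumes m: "m < k" and U: "orthonormal_on n1 q U {1..Suc m}" and V: "orthonormal_on n2 q V {1..Suc m}"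
    and i: "i \<in> {1..Suc m}"
  shows "frob_inner n1 q (U i) (U (Suc (Suc m))) = 0"
proof -
  obtain i' where i': "i = Suc i'" "i' < k" using i m by (cases i) auto
  have "complex_of_real (\<alpha> (Suc (Suc m))) * frob_inner n1 q (U i) (U (Suc (Suc m)))
      = frob_inner n1 q (U i) (\<lambda>a b. complex_of_real (\<alpha> (Suc (Suc m))) * U (Suc (Suc m)) a b)"
    by (simp only: frob_inner_scale_right)
  also have "\<dots> = frob_inner n2 q (mat_mult n1 (mat_adjoint M) (U i)) (V (Suc m))
        - complex_of_real (\<beta> (Suc m)) * frob_inner n1 q (U i) (U (Suc m))"
    by (simp add: U_Suc[OF m] frob_inner_diff_right frob_inner_scale_right
        frob_inner_mat_adjoint[symmetric])
  also have "frob_inner n2 q (mat_mult n1 (mat_adjoint M) (U i)) (V (Suc m))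
      = complex_of_real (\<beta> i) * frob_inner n2 q (V i) (V (Suc m))
        + complex_of_real (\<alpha> i) * frob_inner n2 q (V i') (V (Suc m))"
    by (simp add: i' mat_mult_adjoint_U frob_inner_add_left frob_inner_scale_left)
  also have "frob_inner n2 q (V i') (V (Suc m)) = 0"
    using V i i' V_0 unfolding orthonormal_on_def by (cases i') auto
  finally have "complex_of_real (\<alpha> (Suc (Suc m))) * frob_inner n1 q (U i) (U (Suc (Suc m))) = 0"
    using U V i unfolding orthonormal_on_def by auto
  thus ?thesis using \<alpha>_nonzero[OF m] by simp
qed

lemma orthonormal_upto:
  assumes "m \<le> k"
  shows "orthonormal_on n1 q U {1..Suc m} \<and> orthonormal_on n2 q V {1..m}"
  using assms
proof (induction m)
  case 0
  show ?case using U_1_unit unfolding orthonormal_on_def by simp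
next
  case (Suc m)
  hence m: "m < k" and U: "orthonormal_on n1 q U {1..Suc m}" and V: "orthonormal_on n2 q V {1..m}"
    by auto
  have V': "orthonormal_on n2 q V {1..Suc m}"
    using orthonormal_on_insert[OF V V_Suc_orthogonal[OF m U V] V_Suc_unit[OF m]]
    by (simp add: atLeastAtMostSuc_conv)
  have "orthonormal_on n1 q U {1..Suc (Suc m)}"
    using orthonormal_on_insert[OF U U_Suc_orthogonal[OF m U V'] U_Suc_unit[OF m]]
    by (simp add: atLeastAtMostSuc_conv)
  with V' show ?case by simp
qed

end

section \<open>The tubal-global Golub-Kahan iterates slice by slice\<close>

lemma normalization_fslice:
  assumes n: "0 < n" and t: "t < n" and norm: "normalization p q n W = Some (Q, a)"
  defines "c \<equiv> Re (fslice n a t 0 0)"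
  shows "fslice n a t i j = complex_of_real c"
    and "c \<noteq> 0"
    and "complex_of_real c * fslice n Q t i j = fslice n W t i j"
    and "frob_inner p q (fslice n Q t) (fslice n Q t) = 1"
proof -
  let ?c = "\<lambda>t. cfrob p q (fslice n W t)"
  have nz: "\<forall>t<n. ?c t \<noteq> 0"
    using norm unfolding normalization_def by (auto split: if_splits)
  hence "normalization p q n W = Some (ifourier n (\<lambda>t i j. fslice n W t i j / complex_of_real (?c t)),
                                     ifourier n (\<lambda>t i j. complex_of_real (?c t)))"
    unfolding normalization_def by auto
  hence Q: "Q = ifourier n (\<lambda>t i j. fslice n W t i j / complex_of_real (?c t))"
    and a: "a = ifourier n (\<lambda>t i j. complex_of_real (?c t))"
    using norm by simp_all
  have c_rev: "?c ((n - u) mod n) = ?c u" if "u < n" for u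
  proof -
    have "fslice n W ((n - u) mod n) = (\<lambda>i j. cnj (fslice n W u i j))"
      using fslice_rev[OF n that] by (intro ext)
    thus ?thesis by (simp add: cfrob_cnj)
  qed
  have "conj_symmetric n (\<lambda>t i j. complex_of_real (?c t))"
    unfolding conj_symmetric_def using c_rev by simp
  hence a_t: "fslice n a t i j = complex_of_real (?c t)" for i j
    unfolding a using n t by (simp add: fslice_ifourier)
  hence c: "c = ?c t" unfolding c_def by simp
  show "fslice n a t i j = complex_of_real c" using a_t c by simp
  show "c \<noteq> 0" using nz t c by simp
  have "conj_symmetric n (\<lambda>t i j. fslice n W t i j / complex_of_real (?c t))"
    unfolding conj_symmetric_def using n c_rev by (simp add: fslice_rev)
  hence Q_t: "fslice n Q t = (\<lambda>i j. inverse (complex_of_real c) * fslice n W t i j)"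
    unfolding Q c using n t by (intro ext) (simp add: fslice_ifourier divide_inverse mult.commute)
  show "complex_of_real c * fslice n Q t i j = fslice n W t i j"
    using \<open>c \<noteq> 0\<close> by (simp add: Q_t)
  have "frob_inner p q (fslice n Q t) (fslice n Q t)
      = inverse (complex_of_real c) * inverse (complex_of_real c) * complex_of_real (c\<^sup>2)"
    unfolding Q_t by (simp add: frob_inner_scale_left frob_inner_scale_right frob_inner_self c)
  also have "\<dots> = 1"
    using \<open>c \<noteq> 0\<close> by (simp add: field_simps power2_eq_square)
  finally show "frob_inner p q (fslice n Q t) (fslice n Q t) = 1" .
qed

lemma gk_state_le:
  assumes "gk_state n1 n2 n3 s A B k \<noteq> None" "m \<le> k"
  shows "gk_state n1 n2 n3 s A B m \<noteq> None"
  using assms by (induction k) (auto simp: le_Suc_eq split: option.splits)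

lemma gk_state_0_normalization:
  assumes "gk_state n1 n2 n3 s A B 0 \<noteq> None"
  shows "normalization n1 s n3 B = Some (gkU n1 n2 n3 s A B 1, gka n1 n2 n3 s A B 1)"
    and "gkV n1 n2 n3 s A B 0 = (\<lambda>_ _ _. 0)"
  using assms unfolding gkU_def gka_def gkV_def by (auto split: option.splits)

lemma gk_state_Suc_normalization:
  assumes "gk_state n1 n2 n3 s A B (Suc m) \<noteq> None"
  shows "normalization n2 s n3 (\<lambda>i j l. tprod n3 n1 (ttrans n3 A) (gkU n1 n2 n3 s A B (Suc m)) i j l
            - tscale n3 (gka n1 n2 n3 s A B (Suc m)) (gkV n1 n2 n3 s A B m) i j l)
          = Some (gkV n1 n2 n3 s A B (Suc m), gkb n1 n2 n3 s A B (Suc m))"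
    and "normalization n1 s n3 (\<lambda>i j l. tprod n3 n2 A (gkV n1 n2 n3 s A B (Suc m)) i j l
            - tscale n3 (gkb n1 n2 n3 s A B (Suc m)) (gkU n1 n2 n3 s A B (Suc m)) i j l)
          = Some (gkU n1 n2 n3 s A B (Suc (Suc m)), gka n1 n2 n3 s A B (Suc (Suc m)))"
  using assms by (auto simp: gkU_def gka_def gkV_def gkb_def gk_step_def split: option.splits)

lemma sum_lessThan_mult:
  fixes k s :: nat
  shows "(\<Sum>c<k * s. g c) = (\<Sum>q<k. \<Sum>r<s. g (q * s + r))"
proof -
  have "(\<Sum>c<k * s. g c) = (\<Sum>q<k. \<Sum>c\<in>{q * s..<q * s + s}. g c)"
    by (rule sum.nat_group[symmetric])
  also have "\<dots> = (\<Sum>q<k. \<Sum>r<s. g (q * s + r))"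
    by (rule sum.cong[OF refl], subst sum.atLeastLessThan_shift_0) (simp add: atLeast0LessThan)
  finally show ?thesis .
qed

locale gk_fourier_slice =
  fixes n1 n2 n3 s k :: nat and A B :: tensor and t :: nat
  assumes n3_pos: "0 < n3" and t_less: "t < n3"
    and no_breakdown: "gk_state n1 n2 n3 s A B k \<noteq> None"
begin

abbreviation "Ah \<equiv> fslice n3 A t"
abbreviation "Uh j \<equiv> fslice n3 (gkU n1 n2 n3 s A B j) t"
abbreviation "Vh j \<equiv> fslice n3 (gkV n1 n2 n3 s A B j) t"
definition \<alpha> :: "nat \<Rightarrow> real" where "\<alpha> j = Re (fslice n3 (gka n1 n2 n3 s A B j) t 0 0)"
definition \<beta> :: "nat \<Rightarrow> real" where "\<beta> j = Re (fslice n3 (gkb n1 n2 n3 s A B j) t 0 0)"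

lemmas normalization_0 = gk_state_0_normalization[OF gk_state_le[OF no_breakdown le0]]

lemmas normalization_fslice_0 = normalization_fslice[OF n3_pos t_less normalization_0(1)]
lemmas normalization_fslice_V = normalization_fslice[OF n3_pos t_less
  gk_state_Suc_normalization(1)[OF gk_state_le[OF no_breakdown Suc_leI]]]
lemmas normalization_fslice_U = normalization_fslice[OF n3_pos t_less
  gk_state_Suc_normalization(2)[OF gk_state_le[OF no_breakdown Suc_leI]]]

lemma fslice_gka:
  assumes "1 \<le> j" "j \<le> Suc k"
  shows "fslice n3 (gka n1 n2 n3 s A B j) t i i' = complex_of_real (\<alpha> j)"
proof (cases "j = 1")
  case True
  show ?thesis unfolding True \<alpha>_def by (rule normalization_fslice_0(1))
next
  case False
  define m where "m = j - 2"
  have j: "j = Suc (Suc m)" and m: "m < k" using False assms unfolding m_def by auto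
  show ?thesis unfolding j \<alpha>_def by (rule normalization_fslice_U(1)[OF m])
qed

lemma fslice_gkb:
  assumes "1 \<le> j" "j \<le> k"
  shows "fslice n3 (gkb n1 n2 n3 s A B j) t i i' = complex_of_real (\<beta> j)"
proof -
  obtain m where j: "j = Suc m" and m: "m < k" using assms by (cases j) auto
  show ?thesis unfolding j \<beta>_def by (rule normalization_fslice_V(1)[OF m])
qed

lemma slices_golub_kahan_bidiag: "golub_kahan_bidiag n1 n2 s k Ah Uh Vh \<alpha> \<beta>"
proof
  show "Vh 0 = (\<lambda>i j. 0)" unfolding normalization_0(2) by (simp add: fun_eq_iff)
  show "frob_inner n1 s (Uh 1) (Uh 1) = 1" by (rule normalization_fslice_0(4))
  fix m assume m: "m < k"
  show "frob_inner n2 s (Vh (Suc m)) (Vh (Suc m)) = 1" by (rule normalization_fslice_V(4)[OF m])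
  show "frob_inner n1 s (Uh (Suc (Suc m))) (Uh (Suc (Suc m))) = 1" by (rule normalization_fslice_U(4)[OF m])
  show "\<alpha> (Suc (Suc m)) \<noteq> 0" unfolding \<alpha>_def by (rule normalization_fslice_U(2)[OF m])
  show "\<beta> (Suc m) \<noteq> 0" unfolding \<beta>_def by (rule normalization_fslice_V(2)[OF m])
  fix i j
  note normalization_fslice_V(3)[OF m, of i j, folded \<beta>_def]
  also have "fslice n3 (\<lambda>i j l. tprod n3 n1 (ttrans n3 A) (gkU n1 n2 n3 s A B (Suc m)) i j l
      - tscale n3 (gka n1 n2 n3 s A B (Suc m)) (gkV n1 n2 n3 s A B m) i j l) t i j
    = mat_mult n1 (mat_adjoint Ah) (Uh (Suc m)) i j - complex_of_real (\<alpha> (Suc m)) * Vh m i j"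
    using m n3_pos t_less
    by (simp add: fslice_diff fslice_tprod fslice_ttrans fslice_tscale fslice_gka mat_mult_def
        mat_adjoint_def)
  finally show "complex_of_real (\<beta> (Suc m)) * Vh (Suc m) i j
      = mat_mult n1 (mat_adjoint Ah) (Uh (Suc m)) i j - complex_of_real (\<alpha> (Suc m)) * Vh m i j" .
  note normalization_fslice_U(3)[OF m, of i j, folded \<alpha>_def]
  also have "fslice n3 (\<lambda>i j l. tprod n3 n2 A (gkV n1 n2 n3 s A B (Suc m)) i j l
      - tscale n3 (gkb n1 n2 n3 s A B (Suc m)) (gkU n1 n2 n3 s A B (Suc m)) i j l) t i j
    = mat_mult n2 Ah (Vh (Suc m)) i j - complex_of_real (\<beta> (Suc m)) * Uh (Suc m) i j"
    using m n3_pos t_less by (simp add: fslice_diff fslice_tprod fslice_tscale fslice_gkb mat_mult_def)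
  finally show "complex_of_real (\<alpha> (Suc (Suc m))) * Uh (Suc (Suc m)) i j
      = mat_mult n2 Ah (Vh (Suc m)) i j - complex_of_real (\<beta> (Suc m)) * Uh (Suc m) i j" .
qed

interpretation golub_kahan_bidiag n1 n2 s k Ah Uh Vh \<alpha> \<beta>
  by (rule slices_golub_kahan_bidiag)

abbreviation "Xk Y \<equiv> tprod n3 (k * s) (gkVcat n1 n2 n3 s A B) (tkron n3 s s Y tid)"

abbreviation "projected_residual Y \<equiv> (\<lambda>i j l. tprod n3 1 E1 (gka n1 n2 n3 s A B 1) i j l
                                          - tprod n3 k (gkC n1 n2 n3 s A B k) Y i j l)"

lemma fslice_B: "fslice n3 B t i j = complex_of_real (\<alpha> 1) * Uh 1 i j"
  using normalization_fslice_0(3)[folded \<alpha>_def] by simp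

lemma fslice_gkC:
  "fslice n3 (gkC n1 n2 n3 s A B k) t i q =
     (if q < k \<and> i = q then complex_of_real (\<beta> (Suc q))
      else if q < k \<and> i = Suc q then complex_of_real (\<alpha> (Suc (Suc q))) else 0)"
proof -
  consider "q < k \<and> i = q" | "q < k \<and> i = Suc q" | "\<not> (q < k \<and> i = q)" "\<not> (q < k \<and> i = Suc q)"
    by blast
  thus ?thesis
  proof cases
    case 1
    hence "fslice n3 (gkC n1 n2 n3 s A B k) t i q = fslice n3 (gkb n1 n2 n3 s A B (Suc q)) t 0 0"
      unfolding fslice_def gkC_def by simp
    thus ?thesis using 1 by (simp add: fslice_gkb)
  next
    case 2
    hence "fslice n3 (gkC n1 n2 n3 s A B k) t i q = fslice n3 (gka n1 n2 n3 s A B (Suc (Suc q))) t 0 0"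
      unfolding fslice_def gkC_def by simp
    thus ?thesis using 2 by (simp add: fslice_gka)
  next
    case 3
    hence "gkC n1 n2 n3 s A B k i q = (\<lambda>l. 0)" unfolding gkC_def by auto
    thus ?thesis using 3 unfolding fslice_def by auto
  qed
qed

lemma fslice_Xk:
  assumes j: "j < s"
  shows "fslice n3 (Xk Y) t p j = (\<Sum>q<k. Vh (Suc q) p j * fslice n3 Y t q 0)"
proof -
  have "fslice n3 (Xk Y) t p j
      = (\<Sum>c<k * s. Vh (c div s + 1) p (c mod s)
                     * (fslice n3 Y t (c div s) 0 * (if c mod s = j then 1 else 0)))"
    using j n3_pos t_less
    by (simp add: fslice_tprod fslice_tkron fslice_tid) (simp add: fslice_def gkVcat_def)
  also have "\<dots> = (\<Sum>q<k. \<Sum>r<s. Vh (Suc q) p r * (fslice n3 Y t q 0 * (if r = j then 1 else 0)))"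
    unfolding sum_lessThan_mult using j by (intro sum.cong refl) simp
  also have "\<dots> = (\<Sum>q<k. Vh (Suc q) p j * fslice n3 Y t q 0)"
    using j by (simp add: if_distrib cong: if_cong)
  finally show ?thesis .
qed

text \<open>Slice-wise form of the Golub-Kahan relation \<open>A * V_k = U_(k+1) * C_k\<close>.\<close>
lemma mat_mult_Vh_eq_Uh_gkC:
  assumes q: "q < k"
  shows "mat_mult n2 Ah (Vh (Suc q)) a b
       = (\<Sum>i<Suc k. fslice n3 (gkC n1 n2 n3 s A B k) t i q * Uh (Suc i) a b)"
proof -
  have "(\<Sum>i<Suc k. fslice n3 (gkC n1 n2 n3 s A B k) t i q * Uh (Suc i) a b)
      = (\<Sum>i<Suc k. (if i = q then complex_of_real (\<beta> (Suc q)) * Uh (Suc q) a b else 0)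
                  + (if i = Suc q then complex_of_real (\<alpha> (Suc (Suc q))) * Uh (Suc (Suc q)) a b else 0))"
    using q by (intro sum.cong refl) (auto simp: fslice_gkC)
  also have "\<dots> = mat_mult n2 Ah (Vh (Suc q)) a b"
    using q by (simp add: sum.distrib mat_mult_V)
  finally show ?thesis by simp
qed

lemma fslice_projected_residual:
  "fslice n3 (projected_residual Y) t i 0
     = (if i = 0 then complex_of_real (\<alpha> 1) else 0)
       - (\<Sum>q<k. fslice n3 (gkC n1 n2 n3 s A B k) t i q * fslice n3 Y t q 0)"
  using n3_pos t_less by (simp add: fslice_diff fslice_tprod fslice_E1 fslice_gka)

lemma fslice_residual:
  assumes b: "b < s"
  shows "fslice n3 (\<lambda>i j l. B i j l - tprod n3 n2 A (Xk Y) i j l) t a b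
       = (\<Sum>i<Suc k. fslice n3 (projected_residual Y) t i 0 * Uh (Suc i) a b)"
proof -
  let ?y = "\<lambda>q. fslice n3 Y t q 0"
  let ?C = "fslice n3 (gkC n1 n2 n3 s A B k) t"
  have "fslice n3 (\<lambda>i j l. B i j l - tprod n3 n2 A (Xk Y) i j l) t a b
      = complex_of_real (\<alpha> 1) * Uh 1 a b - (\<Sum>p<n2. \<Sum>q<k. Ah a p * (Vh (Suc q) p b * ?y q))"
    by (simp only: fslice_diff fslice_B fslice_tprod[OF n3_pos t_less, of n2 A] fslice_Xk[OF b]
        sum_distrib_left)
  also have "(\<Sum>p<n2. \<Sum>q<k. Ah a p * (Vh (Suc q) p b * ?y q))
      = (\<Sum>q<k. ?y q * mat_mult n2 Ah (Vh (Suc q)) a b)"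
    unfolding mat_mult_def by (subst sum.swap) (simp add: sum_distrib_left mult_ac)
  also have "\<dots> = (\<Sum>q<k. \<Sum>i<Suc k. ?y q * ?C i q * Uh (Suc i) a b)"
    by (simp add: mat_mult_Vh_eq_Uh_gkC sum_distrib_left mult.assoc del: sum.lessThan_Suc)
  also have "\<dots> = (\<Sum>i<Suc k. \<Sum>q<k. ?C i q * ?y q * Uh (Suc i) a b)"
    by (subst sum.swap) (simp add: mult_ac)
  also have "complex_of_real (\<alpha> 1) * Uh 1 a b - \<dots>
      = (\<Sum>i<Suc k. fslice n3 (projected_residual Y) t i 0 * Uh (Suc i) a b)"
    unfolding fslice_projected_residual
    by (simp add: left_diff_distrib sum_subtractf sum_distrib_right sum.lessThan_Suc_shift
        del: sum.lessThan_Suc)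
  finally show ?thesis .
qed

lemma cfrob_fslice_residual:
  "cfrob n1 s (fslice n3 (\<lambda>i j l. B i j l - tprod n3 n2 A (Xk Y) i j l) t)
     = cfrob (Suc k) 1 (fslice n3 (projected_residual Y) t)"
proof -
  let ?r = "\<lambda>i. fslice n3 (projected_residual Y) t i 0"
  have orth: "orthonormal_on n1 s (\<lambda>i. Uh (Suc i)) {..<Suc k}"
    using orthonormal_upto[of k] unfolding orthonormal_on_def by auto
  have "cfrob n1 s (fslice n3 (\<lambda>i j l. B i j l - tprod n3 n2 A (Xk Y) i j l) t)
      = cfrob n1 s (\<lambda>a b. \<Sum>i<Suc k. ?r i * Uh (Suc i) a b)"
    by (rule cfrob_cong) (rule fslice_residual)
  also have "\<dots> = sqrt (\<Sum>i<Suc k. (cmod (?r i))\<^sup>2)"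
    using orth by (rule cfrob_orthonormal_sum) simp
  also have "\<dots> = cfrob (Suc k) 1 (fslice n3 (projected_residual Y) t)"
    unfolding cfrob_def by simp
  finally show ?thesis .
qed

end

theorem proposition14:
  fixes n1 n2 n3 s k :: nat and A B Y :: tensor
  assumes "0 < n1" "0 < n2" "0 < n3" "0 < s"
    and nobreak: "gk_state n1 n2 n3 s A B k \<noteq> None"
  defines "Xk \<equiv> tprod n3 (k * s) (gkVcat n1 n2 n3 s A B) (tkron n3 s s Y tid)"
  shows "frob n1 s n3 (\<lambda>i j l. B i j l - tprod n3 n2 A Xk i j l)
       = tl2 (k + 1) n3 (\<lambda>i j l. tprod n3 1 E1 (gka n1 n2 n3 s A B 1) i j l
                                 - tprod n3 k (gkC n1 n2 n3 s A B k) Y i j l)"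
proof -
  have "cfrob n1 s (fslice n3 (\<lambda>i j l. B i j l - tprod n3 n2 A Xk i j l) t)
      = cfrob (k + 1) 1 (fslice n3 (\<lambda>i j l. tprod n3 1 E1 (gka n1 n2 n3 s A B 1) i j l
                                           - tprod n3 k (gkC n1 n2 n3 s A B k) Y i j l) t)"
    if "t < n3" for t
  proof -
    interpret gk_fourier_slice n1 n2 n3 s k A B t
      using \<open>0 < n3\<close> that nobreak by unfold_locales
    show ?thesis unfolding Xk_def by (simp add: cfrob_fslice_residual)
  qed
  thus ?thesis using \<open>0 < n3\<close> by (simp add: frob_eq_fslice_cfrob tl2_eq_fslice_cfrob)
qed

end
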